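(* Let $\sigma$ be any position of the parallel chip-firing game on $K_{a,b}$ ($a,b\ge1$). If $p(\sigma)$ is odd then $p(\sigma)\le\min(a,b)$, and if $p(\sigma)$ is even then $p(\sigma)\le 2\min(a,b)$.
   Context: Parallel chip-firing game: a position $\sigma$ assigns a nonnegative integer to each vertex; in each step every vertex $v$ with $\sigma(v)\ge\deg(v)$ simultaneously sends one chip to each neighbor. $K_{a,b}$ is the complete bipartite graph with sides of sizes $a$ and $b$. The period $p(\sigma)$ is the least positive integer $p$ such that $U^{t+p}\sigma=U^t\sigma$ for all sufficiently large $t$, where $U$ is the step operator. *)

theory Defs
  imports Main
begin

(* A finite simple graph given by vertex set V and symmetric irreflexive adjacency E. *)
definition deg :: "'v set \<Rightarrow> ('v \<Rightarrow> 'v \<Rightarrow> bool) \<Rightarrow> 'v \<Rightarrow> nat" where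
  "deg V E v = card {w \<in> V. E v w}"

definition pstep :: "'v set \<Rightarrow> ('v \<Rightarrow> 'v \<Rightarrow> bool) \<Rightarrow> ('v \<Rightarrow> nat) \<Rightarrow> ('v \<Rightarrow> nat)" where
  "pstep V E \<sigma> = (\<lambda>v. if v \<in> V then
       (if \<sigma> v \<ge> deg V E v then \<sigma> v - deg V E v else \<sigma> v)
       + card {w \<in> V. E v w \<and> \<sigma> w \<ge> deg V E w}
     else \<sigma> v)"

definition period :: "'v set \<Rightarrow> ('v \<Rightarrow> 'v \<Rightarrow> bool) \<Rightarrow> ('v \<Rightarrow> nat) \<Rightarrow> nat" where
  "period V E \<sigma> = (LEAST p. p > 0 \<and>
      (\<exists>T. \<forall>t\<ge>T. (pstep V E ^^ (t + p)) \<sigma> = (pstep V E ^^ t) \<sigma>))"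

definition Kab_V :: "nat \<Rightarrow> nat \<Rightarrow> (nat + nat) set" where
  "Kab_V a b = Inl ` {..<a} \<union> Inr ` {..<b}"

definition Kab_E :: "(nat + nat) \<Rightarrow> (nat + nat) \<Rightarrow> bool" where
  "Kab_E x y = ((isl x \<and> \<not> isl y) \<or> (\<not> isl x \<and> isl y))"

end

theory Submission
  imports Defs "HOL-Library.FuncSet"
begin

(* Write x_t(i) for the chips on the left vertex i (degree b) and y_t(j) for the chips on
   the right vertex j (degree a).  Once the orbit is periodic with period p there are two
   regimes.
   (1) Some pile reaches twice its degree.  It can then never become small again, and being
       periodic and non-increasing it is constant; hence every vertex of the other side fires
       at every step, and the same argument there shows that every vertex fires at every
       step: the position is fixed.
   (2) All piles stay below twice their degree.  Then left vertex i has fired exactly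
       floor((x_0(i) + Z)/b) times after receiving Z chips, so the number T_n of left firings
       before time n satisfies T_{n+2} = F(T_n) for a monotone map F commuting with z |-> z+a.
       A rotation-number argument yields nu dividing p and mu coprime to nu with
       T_{n+2 nu} = T_n + mu a; the residues T_{2i} mod a (i < nu) are then distinct, so
       nu <= a, and the whole game repeats with period 2 nu.
   In both cases some nu <= a dividing p is such that 2 nu is an eventual period; by symmetry
   the same holds with b, and minimality of p gives the bound. *)


lemma card_less_Suc_filter:
  "card {s. s < Suc n \<and> P s} = card {s. s < n \<and> P s} + (if P n then 1 else 0)"
proof -
  have "{s. s < Suc n \<and> P s} = (if P n then insert n {s. s < n \<and> P s} else {s. s < n \<and> P s})"
    by (auto simp: less_Suc_eq)
  then show ?thesis by simp
qed

lemma double_counting: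
  fixes N a :: nat
  shows "(\<Sum>s<N. card {i. i < a \<and> P s i}) = (\<Sum>i<a. card {s. s < N \<and> P s i})"
proof (induction N)
  case 0
  then show ?case by simp
next
  case (Suc N)
  have "card {i. i < a \<and> P N i} = (\<Sum>i<a. (if P N i then 1 else 0))"
    by (induction a) (simp_all add: card_less_Suc_filter)
  then show ?case using Suc by (simp add: card_less_Suc_filter sum.distrib)
qed

lemma shift_iterate:
  fixes f :: "nat \<Rightarrow> nat"
  assumes shift: "\<And>n. n0 \<le> n \<Longrightarrow> f (n + p) = f n + c" and "n0 \<le> n"
  shows "f (n + m * p) = f n + m * c"
proof (induction m)
  case 0
  then show ?case by simp
next
  case (Suc m)
  have "f (n + Suc m * p) = f ((n + m * p) + p)" by (simp add: algebra_simps)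
  also have "\<dots> = f (n + m * p) + c" using shift \<open>n0 \<le> n\<close> by simp
  finally show ?case using Suc by simp
qed

lemma funpow_translation_commute:
  fixes F :: "nat \<Rightarrow> nat"
  assumes "\<And>z. F (z + d) = F z + d"
  shows "(F ^^ m) (z + c * d) = (F ^^ m) z + c * d"
proof -
  have F: "F (w + c * d) = F w + c * d" for w c
  proof -
    have "F (w + (n + d)) = F (w + n) + d" for n using assms[of "w + n"] by (simp add: add.assoc)
    then show ?thesis using shift_iterate[of 0 "\<lambda>n. F (w + n)" d d 0 c] by simp
  qed
  show ?thesis by (induction m) (simp_all add: F)
qed

text \<open>Rotation number of a monotone map: if \<open>G\<close> commutes with translation by \<open>e\<close> and
  advances \<open>u\<close> by \<open>g * e\<close> in \<open>g\<close> steps, then it advances \<open>u\<close> by exactly \<open>e\<close> in one step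
  (otherwise the deviation would accumulate with the same sign).\<close>

lemma rotation_number_exact:
  fixes G :: "nat \<Rightarrow> nat"
  assumes mono: "mono G" and shift: "\<And>z c. G (z + c * e) = G z + c * e"
    and iter: "(G ^^ g) u = u + g * e" and "0 < g"
  shows "G u = u + e"
proof -
  obtain g' where g': "g = Suc g'" using \<open>0 < g\<close> by (cases g) auto
  have Ge: "G (u + e) = G u + e" using shift[of u 1] by simp
  show ?thesis
  proof (cases "u + e \<le> G u")
    case True
    have "G u + j * e \<le> (G ^^ Suc j) u" for j
    proof (induction j)
      case (Suc j)
      have "G u + Suc j * e = G (u + e) + j * e" using Ge by simp
      also have "\<dots> \<le> G (G u) + j * e" using True mono by (simp add: monoD)
      also have "\<dots> = G (G u + j * e)" by (rule shift[symmetric])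
      also have "\<dots> \<le> (G ^^ Suc (Suc j)) u" using Suc mono by (simp add: monoD)
      finally show ?case .
    qed simp
    from this[of g'] iter g' have "G u \<le> u + e" by simp
    then show ?thesis using True by simp
  next
    case False
    have "(G ^^ Suc j) u \<le> G u + j * e" for j
    proof (induction j)
      case (Suc j)
      have "(G ^^ Suc (Suc j)) u \<le> G (G u + j * e)" using Suc mono by (simp add: monoD)
      also have "\<dots> = G (G u) + j * e" by (rule shift)
      also have "\<dots> \<le> G (u + e) + j * e" using False mono by (simp add: monoD)
      finally show ?case using Ge by simp
    qed simp
    from this[of g'] iter g' have "u + e \<le> G u" by simp
    then show ?thesis using False by simp
  qed
qed

lemma antimono_periodic_const:
  fixes f :: "nat \<Rightarrow> nat"
  assumes dec: "\<And>t. f (Suc t) \<le> f t" and per: "\<And>t. f (t + p) = f t" and "0 < p"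
  shows "f (Suc t) = f t"
proof -
  have "antimono f" using dec by (simp add: antimono_iff_le_Suc)
  then have "f (t + p) \<le> f (Suc t)" using \<open>0 < p\<close> by (simp add: antimonoD)
  then show ?thesis using per[of t] dec[of t] by simp
qed

lemma odd_multiple_le:
  fixes P n :: nat
  assumes "n dvd P" and "P \<le> 2 * n" and "odd P"
  shows "P \<le> n"
proof -
  obtain c where c: "P = n * c" using assms(1) by blast
  have "odd c" using assms(3) c by simp
  have "0 < n" using assms(3) c by (cases n) auto
  moreover have "n * c \<le> n * 2" using assms(2) c by (simp add: mult.commute)
  ultimately have "c \<le> 2" by simp
  with \<open>odd c\<close> have "c = 1" by presburger
  then show ?thesis using c by simp
qed

lemma eventually_periodic_orbit:
  fixes f :: "'a \<Rightarrow> 'a"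
  assumes "finite (range (\<lambda>t. (f ^^ t) s))"
  shows "\<exists>p>0. \<exists>T. \<forall>t\<ge>T. (f ^^ (t + p)) s = (f ^^ t) s"
proof -
  have "\<not> inj (\<lambda>t. (f ^^ t) s)" using assms finite_imageD infinite_UNIV_nat by blast
  then obtain t1 t2 where eq: "(f ^^ t1) s = (f ^^ t2) s" and "t1 < t2"
    unfolding inj_def by (metis linorder_neqE_nat)
  have "(f ^^ (t + (t2 - t1))) s = (f ^^ t) s" if "t1 \<le> t" for t
  proof -
    obtain m where m: "t = m + t1" using le_add_diff_inverse2[OF \<open>t1 \<le> t\<close>] by metis
    have "t + (t2 - t1) = m + t2" using m \<open>t1 < t2\<close> by simp
    then show ?thesis using eq m by (simp add: funpow_add)
  qed
  then show ?thesis using \<open>t1 < t2\<close> by (intro exI[of _ "t2 - t1"]) auto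
qed

lemma finite_functions_bounded_on:
  assumes "finite V"
  shows "finite {g :: 'a \<Rightarrow> nat. (\<forall>v\<in>V. g v \<le> M) \<and> (\<forall>v. v \<notin> V \<longrightarrow> g v = h v)}"
    (is "finite ?G")
proof -
  have "inj_on (\<lambda>g. restrict g V) ?G"
  proof (rule inj_onI, rule ext)
    fix g g' v assume "g \<in> ?G" "g' \<in> ?G" and eq: "restrict g V = restrict g' V"
    have "restrict g V v = restrict g' V v" using eq by simp
    then show "g v = g' v" using \<open>g \<in> ?G\<close> \<open>g' \<in> ?G\<close> by (cases "v \<in> V") auto
  qed
  moreover have "(\<lambda>g. restrict g V) ` ?G \<subseteq> V \<rightarrow>\<^sub>E {..M}" by auto
  then have "finite ((\<lambda>g. restrict g V) ` ?G)"
    using assms by (meson finite_PiE finite_atMost finite_subset)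
  ultimately show ?thesis by (rule finite_imageD[rotated])
qed


section \<open>The game on \<open>K\<^sub>a\<^sub>,\<^sub>b\<close> in coordinates\<close>

text \<open>\<open>x t i\<close> (\<open>i < a\<close>) and \<open>y t j\<close> (\<open>j < b\<close>) are the piles on the two sides at time \<open>t\<close>.\<close>

locale bipartite_game =
  fixes a b :: nat and x y :: "nat \<Rightarrow> nat \<Rightarrow> nat"
  assumes a_pos: "1 \<le> a" and b_pos: "1 \<le> b"
    and x_Suc: "\<And>t i. i < a \<Longrightarrow> x (Suc t) i =
        (if b \<le> x t i then x t i - b else x t i) + card {j. j < b \<and> a \<le> y t j}"
    and y_Suc: "\<And>t j. j < b \<Longrightarrow> y (Suc t) j =
        (if a \<le> y t j then y t j - a else y t j) + card {i. i < a \<and> b \<le> x t i}"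
begin

text \<open>Chips received by every left vertex at time \<open>t\<close>, their running total, the number of
  firings of left vertex \<open>i\<close> before time \<open>n\<close>, and the number of left firings predicted by a
  running total \<open>z\<close> of received chips when all piles stay small.\<close>

definition inflow :: "nat \<Rightarrow> nat" where
  "inflow t = card {j. j < b \<and> a \<le> y t j}"

definition inflow_sum :: "nat \<Rightarrow> nat" where
  "inflow_sum n = (\<Sum>s<n. inflow s)"

definition fired :: "nat \<Rightarrow> nat \<Rightarrow> nat" where
  "fired i n = card {s. s < n \<and> b \<le> x s i}"

definition fire_count :: "nat \<Rightarrow> nat" where
  "fire_count z = (\<Sum>i<a. (x 0 i + z) div b)"

definition repeats :: "nat \<Rightarrow> nat \<Rightarrow> bool" where
  "repeats t0 q \<longleftrightarrow> (\<forall>t\<ge>t0. (\<forall>i<a. x (t + q) i = x t i) \<and> (\<forall>j<b. y (t + q) j = y t j))"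

end

sublocale bipartite_game \<subseteq> dual: bipartite_game b a y x
  using bipartite_game_axioms unfolding bipartite_game_def by auto

text \<open>A fact proved in the locale becomes available for the other side (prefix \<open>dual\<close>)
  only after the locale context is entered again; this is why the development below is split
  into several context blocks.\<close>

context bipartite_game
begin

lemma repeats_x: "repeats t0 q \<Longrightarrow> t0 \<le> t \<Longrightarrow> i < a \<Longrightarrow> x (t + q) i = x t i"
  by (simp add: repeats_def)

lemma repeats_y: "repeats t0 q \<Longrightarrow> t0 \<le> t \<Longrightarrow> j < b \<Longrightarrow> y (t + q) j = y t j"
  by (simp add: repeats_def)

lemma x_Suc_inflow:
  "i < a \<Longrightarrow> x (Suc t) i = (if b \<le> x t i then x t i - b else x t i) + inflow t"
  by (simp add: x_Suc inflow_def)

lemma inflow_le: "inflow t \<le> b"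
  unfolding inflow_def using card_mono[of "{..<b}" "{j. j < b \<and> a \<le> y t j}"] by auto

lemma inflow_sum_Suc: "inflow_sum (Suc n) = inflow_sum n + inflow n"
  by (simp add: inflow_sum_def)

lemma repeats_dual: "dual.repeats t0 q = repeats t0 q"
  by (auto simp: repeats_def dual.repeats_def)

lemma chip_balance: "i < a \<Longrightarrow> x n i + b * fired i n = x 0 i + inflow_sum n"
proof (induction n)
  case 0
  then show ?case by (simp add: fired_def inflow_sum_def)
next
  case (Suc n)
  then show ?case
    by (cases "b \<le> x n i")
      (auto simp: fired_def x_Suc_inflow card_less_Suc_filter inflow_sum_Suc algebra_simps)
qed

lemma fired_Suc_div:
  assumes "i < a" and "x n i < 2 * b"
  shows "fired i (Suc n) = (x 0 i + inflow_sum n) div b"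
proof -
  have bal: "x 0 i + inflow_sum n = x n i + fired i n * b"
    using chip_balance[OF assms(1), of n] by (simp add: algebra_simps)
  show ?thesis
  proof (cases "b \<le> x n i")
    case True
    then have "x 0 i + inflow_sum n = (x n i - b) + (fired i n + 1) * b" using bal by simp
    moreover have "x n i - b < b" using assms(2) True by simp
    moreover have "(r + q * b) div b = q" if "r < b" for r q using that by simp
    ultimately have "(x 0 i + inflow_sum n) div b = fired i n + 1" by presburger
    then show ?thesis using True by (simp add: fired_def card_less_Suc_filter)
  next
    case False
    then show ?thesis using bal by (simp add: fired_def card_less_Suc_filter)
  qed
qed

lemma dual_inflow_sum: "dual.inflow_sum n = (\<Sum>i<a. fired i n)"
  unfolding dual.inflow_sum_def dual.inflow_def fired_def by (rule double_counting)

text \<open>A pile never exceeds its initial size or twice its degree, and once below twice its degree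
  it stays there: it receives at most \<open>b\<close> chips and sends \<open>b\<close> whenever it has \<open>b\<close>.\<close>

lemma x_le_max: "i < a \<Longrightarrow> x t i \<le> max (x 0 i) (2 * b)"
proof (induction t)
  case (Suc t)
  then show ?case using inflow_le[of t] by (cases "b \<le> x t i") (auto simp: x_Suc_inflow)
qed simp

lemma small_pile_stays_small: "i < a \<Longrightarrow> x s i < 2 * b \<Longrightarrow> x (s + m) i < 2 * b"
proof (induction m)
  case (Suc m)
  then show ?case using inflow_le[of "s + m"] by (cases "b \<le> x (s + m) i") (auto simp: x_Suc_inflow)
qed simp

text \<open>The predicted firing count is monotone and commutes with translations by multiples of \<open>b\<close>
  (each of the \<open>a\<close> left vertices fires once more per \<open>b\<close> extra chips).\<close>

lemma fire_count_mono: "mono fire_count"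
  unfolding fire_count_def by (intro monoI sum_mono div_le_mono) auto

lemma fire_count_shift: "fire_count (z + c * b) = fire_count z + c * a"
proof -
  have "(x 0 i + (z + c * b)) div b = (x 0 i + z) div b + c" for i
    using b_pos by (simp add: add.assoc[symmetric])
  then show ?thesis by (simp add: fire_count_def sum.distrib mult.commute)
qed

end

context bipartite_game
begin

lemma repeats_iterate:
  assumes "repeats t0 q" "t0 \<le> t" "i < a"
  shows "x (t + m * q) i = x t i"
  using shift_iterate[of t0 "\<lambda>t. x t i" q 0 t m] repeats_x[OF assms(1) _ assms(3)] assms(2) by simp

lemma inflow_sum_period:
  assumes "repeats 0 p"
  shows "inflow_sum (n + p) = inflow_sum n + inflow_sum p"
proof -
  have "inflow (t + p) = inflow t" for t
    using repeats_y[OF assms] unfolding inflow_def by (intro arg_cong[where f = card]) auto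
  then show ?thesis by (induction n) (simp_all add: inflow_sum_Suc inflow_sum_def)
qed

lemma dual_inflow_sum_period:
  assumes "repeats 0 p"
  shows "dual.inflow_sum p = a * fired 0 p"
proof -
  have bal: "b * fired i p = inflow_sum p" if "i < a" for i
    using chip_balance[OF that, of p] repeats_x[OF assms _ that, of 0] by simp
  have same: "fired i p = fired 0 p" if "i < a" for i
  proof -
    have "b * fired i p = b * fired 0 p" using bal[OF that] bal[of 0] a_pos by simp
    then show ?thesis using b_pos by simp
  qed
  have "(\<Sum>i<a. fired i p) = (\<Sum>i<a. fired 0 p)" by (rule sum.cong[OF refl], rule same) simp
  then show ?thesis by (simp add: dual_inflow_sum)
qed

subsection \<open>Regime 1: a large pile forces a fixed point\<close>

text \<open>A pile of at least twice its degree can never return to being small, since small piles stay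
  small and the pile recurs.\<close>

lemma large_pile_persists:
  assumes "repeats 0 p" "0 < p" "i < a" "2 * b \<le> x t1 i"
  shows "2 * b \<le> x s i"
proof (rule ccontr)
  assume "\<not> 2 * b \<le> x s i"
  then have small: "x (s + m) i < 2 * b" for m
    using small_pile_stays_small[OF assms(3)] by (simp add: not_le)
  have "s \<le> s * p" using \<open>0 < p\<close> by simp
  then have "t1 + s * p = s + (t1 + s * p - s)" by linarith
  then have "x (t1 + s * p) i < 2 * b" using small by metis
  moreover have "x (t1 + s * p) i = x t1 i" using repeats_iterate[OF assms(1) _ assms(3)] by blast
  ultimately show False using assms(4) by simp
qed

text \<open>A periodic pile that fires at every step is non-increasing, hence constant, so it
  receives \<open>b\<close> chips, i.e.\ all right vertices fire, at every step.\<close>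

lemma always_firing_saturates_inflow:
  assumes "repeats 0 p" "0 < p" "i < a" and fires: "\<And>s. b \<le> x s i"
  shows "inflow s = b"
proof -
  have "x (Suc s) i = x s i" for s
  proof (rule antimono_periodic_const[where p = p])
    show "x (Suc s) i \<le> x s i" for s using fires[of s] inflow_le[of s] assms(3) by (simp add: x_Suc_inflow)
    show "x (s + p) i = x s i" for s using assms(1,3) by (simp add: repeats_def)
  qed fact
  then show ?thesis using fires[of s] assms(3) x_Suc_inflow[of i s] by simp
qed

lemma full_inflow_all_fire: "inflow s = b \<Longrightarrow> j < b \<Longrightarrow> a \<le> y s j"
proof -
  assume "inflow s = b" "j < b"
  then have "{j. j < b \<and> a \<le> y s j} = {..<b}" unfolding inflow_def by (intro card_subset_eq) auto
  then show ?thesis using \<open>j < b\<close> by auto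
qed

end

context bipartite_game
begin

lemma repeats_of_fixed: "repeats 0 1 \<Longrightarrow> repeats t0 q"
  using repeats_iterate[of 0 1 _ _ q] dual.repeats_iterate[of 0 1 _ _ q]
  by (auto simp: repeats_def repeats_dual)

text \<open>Regime 1: a large pile fires forever, so every right vertex fires forever, so (by the same
  argument on the right) every left vertex fires forever; each vertex then loses and gains
  exactly its degree, and the game is fixed.\<close>

lemma large_pile_fixed_point:
  assumes "repeats 0 p" "0 < p" "i < a" "2 * b \<le> x t1 i"
  shows "repeats 0 1"
proof -
  have "b \<le> x s i" for s using large_pile_persists[OF assms, of s] by simp
  then have inflow: "inflow s = b" for s by (rule always_firing_saturates_inflow[OF assms(1-3)])
  then have y_fire: "a \<le> y s j" if "j < b" for s j using full_inflow_all_fire that by blast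
  have "0 < b" using b_pos by simp
  then have dual_inflow: "dual.inflow s = a" for s
    using dual.always_firing_saturates_inflow[of p 0] assms(1,2) y_fire by (simp add: repeats_dual)
  then have x_fire: "b \<le> x s i" if "i < a" for s i using dual.full_inflow_all_fire that by blast
  show ?thesis
    using x_fire y_fire inflow dual_inflow by (simp add: repeats_def x_Suc_inflow dual.x_Suc_inflow)
qed

end


subsection \<open>Regime 2: all piles stay small\<close>

locale bounded_game = bipartite_game +
  assumes x_small: "\<And>t i. i < a \<Longrightarrow> x t i < 2 * b"
    and y_small: "\<And>t j. j < b \<Longrightarrow> y t j < 2 * a"

sublocale bounded_game \<subseteq> dual: bounded_game b a y x
  using bounded_game_axioms dual.bipartite_game_axioms
  unfolding bounded_game_def bounded_game_axioms_def by auto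

context bounded_game
begin

lemma dual_inflow_sum_Suc: "dual.inflow_sum (Suc n) = fire_count (inflow_sum n)"
  by (simp add: dual_inflow_sum fired_Suc_div x_small fire_count_def)

end

context bounded_game
begin

text \<open>Two steps of the game act on the number of left firings by the return map.\<close>

definition return_map :: "nat \<Rightarrow> nat" where
  "return_map = fire_count \<circ> dual.fire_count"

lemma return_map_mono: "mono return_map"
  using fire_count_mono dual.fire_count_mono unfolding return_map_def mono_def by simp

lemma return_map_shift: "return_map (z + a) = return_map z + a"
  using dual.fire_count_shift[of z 1] fire_count_shift[of "dual.fire_count z" 1]
  by (simp add: return_map_def)

lemma return_map_iterate: "dual.inflow_sum (n + 2 * m) = (return_map ^^ m) (dual.inflow_sum n)"
proof (induction m)
  case (Suc m)
  have "dual.inflow_sum (n + 2 * Suc m) = dual.inflow_sum (Suc (Suc (n + 2 * m)))" by simp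
  then show ?case using Suc dual_inflow_sum_Suc dual.dual_inflow_sum_Suc
    by (simp add: return_map_def)
qed simp

lemma x_repeat_of_inflow_shift:
  assumes "i < a" and S0: "inflow_sum (n + q) = inflow_sum n + c * b"
    and S1: "inflow_sum (Suc n + q) = inflow_sum (Suc n) + c * b"
  shows "x (Suc n + q) i = x (Suc n) i"
proof -
  have "(x 0 i + inflow_sum (n + q)) div b = (x 0 i + inflow_sum n) div b + c"
    using S0 b_pos by (simp add: add.assoc[symmetric])
  then have "x (Suc n + q) i + b * ((x 0 i + inflow_sum n) div b + c) = x 0 i + inflow_sum (Suc n) + c * b"
    using chip_balance[OF assms(1), of "Suc n + q"] fired_Suc_div[OF assms(1) x_small[OF assms(1)], of "n + q"] S1
    by simp
  moreover have "x (Suc n) i + b * ((x 0 i + inflow_sum n) div b) = x 0 i + inflow_sum (Suc n)"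
    using chip_balance[OF assms(1), of "Suc n"] fired_Suc_div[OF assms(1) x_small[OF assms(1)], of n] by simp
  ultimately show ?thesis by (simp add: algebra_simps)
qed

lemma rotation_number:
  assumes "repeats 0 p" "0 < p"
  obtains \<nu> \<mu> where "0 < \<nu>" "\<nu> dvd p" "coprime \<mu> \<nu>"
    "\<And>n. dual.inflow_sum (n + 2 * \<nu>) = dual.inflow_sum n + \<mu> * a"
proof -
  define k where "k = fired 0 p"
  define g where "g = gcd (2 * k) p"
  define \<nu> where "\<nu> = p div g"
  define \<mu> where "\<mu> = 2 * k div g"
  have "0 < g" using \<open>0 < p\<close> by (simp add: g_def)
  have p_eq: "p = \<nu> * g" unfolding \<nu>_def g_def by simp
  have k_eq: "2 * k = \<mu> * g" unfolding \<mu>_def g_def by simp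
  have "coprime \<mu> \<nu>" unfolding \<mu>_def \<nu>_def g_def using div_gcd_coprime[of "2 * k" p] \<open>0 < p\<close> by simp
  have "0 < \<nu>" using p_eq \<open>0 < p\<close> by (cases \<nu>) auto
  have per: "dual.inflow_sum (n + p) = dual.inflow_sum n + a * k" for n
    using dual.inflow_sum_period dual_inflow_sum_period assms(1) by (simp add: repeats_dual k_def)
  have shift: "dual.inflow_sum (n + 2 * \<nu>) = dual.inflow_sum n + \<mu> * a" for n
  proof -
    define G where "G = return_map ^^ \<nu>"
    have "(G ^^ g) (dual.inflow_sum n) = dual.inflow_sum (n + 2 * p)"
      using return_map_iterate[of n "\<nu> * g"] p_eq by (simp add: G_def funpow_mult)
    also have "\<dots> = dual.inflow_sum n + g * (\<mu> * a)"
      using shift_iterate[of 0 dual.inflow_sum p "a * k" n 2] per k_eq by (simp add: algebra_simps)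
    finally have "G (dual.inflow_sum n) = dual.inflow_sum n + \<mu> * a"
    proof (rule rotation_number_exact[OF _ _ _ \<open>0 < g\<close>, rotated 2])
      show "mono G" unfolding G_def by (rule mono_pow[OF return_map_mono])
      show "G (z + c * (\<mu> * a)) = G z + c * (\<mu> * a)" for z c
        unfolding G_def using funpow_translation_commute[of return_map a \<nu> z "c * \<mu>"] return_map_shift
        by (simp add: algebra_simps)
    qed
    then show ?thesis using return_map_iterate[of n \<nu>] by (simp add: G_def)
  qed
  show ?thesis using that \<open>0 < \<nu>\<close> p_eq \<open>coprime \<mu> \<nu>\<close> shift by simp
qed

lemma rotation_residues_distinct:
  assumes "coprime \<mu> \<nu>" and shift: "\<And>n. dual.inflow_sum (n + 2 * \<nu>) = dual.inflow_sum n + \<mu> * a"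
    and "i < j" "j < \<nu>"
  shows "dual.inflow_sum (2 * i) mod a \<noteq> dual.inflow_sum (2 * j) mod a"
proof
  let ?T = dual.inflow_sum
  assume eq: "?T (2 * i) mod a = ?T (2 * j) mod a"
  define d where "d = j - i"
  have le: "?T (2 * i) \<le> ?T (2 * j)"
    unfolding dual.inflow_sum_def using \<open>i < j\<close> by (intro sum_mono2) auto
  then obtain c where c: "?T (2 * j) - ?T (2 * i) = a * c"
    using eq mod_eq_dvd_iff_nat by (metis dvdE)
  have step_d: "?T (n + 2 * d) = (return_map ^^ d) (?T n)" for n by (rule return_map_iterate)
  have by_d: "?T (2 * i + m * (2 * d)) = ?T (2 * i) + m * (c * a)" for m
  proof (induction m)
    case (Suc m)
    have "?T (2 * i + Suc m * (2 * d)) = (return_map ^^ d) (?T (2 * i) + (m * c) * a)"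
      using step_d[of "2 * i + m * (2 * d)"] Suc by (simp add: algebra_simps)
    also have "\<dots> = ?T (2 * i + 2 * d) + (m * c) * a"
      using funpow_translation_commute[of return_map a d _ "m * c"] return_map_shift step_d by simp
    also have "?T (2 * i + 2 * d) = ?T (2 * i) + c * a"
      using c le \<open>i < j\<close> by (simp add: d_def algebra_simps)
    finally show ?case by (simp add: algebra_simps)
  qed simp
  have by_\<nu>: "?T (2 * i + m * (2 * \<nu>)) = ?T (2 * i) + m * (\<mu> * a)" for m
    using shift_iterate[of 0 ?T "2 * \<nu>" "\<mu> * a" "2 * i" m] shift by simp
  have "\<nu> * (c * a) = d * (\<mu> * a)" using by_d[of \<nu>] by_\<nu>[of d] by (simp add: algebra_simps)
  then have "\<nu> * c = d * \<mu>" using a_pos by simp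
  then have "\<nu> dvd d" using \<open>coprime \<mu> \<nu>\<close>
    by (metis coprime_commute coprime_dvd_mult_left_iff dvd_triv_left)
  moreover have "0 < d" "d < \<nu>" using \<open>i < j\<close> \<open>j < \<nu>\<close> by (auto simp: d_def)
  ultimately show False by (simp add: nat_dvd_not_less)
qed

lemma rotation_denominator_le:
  assumes "coprime \<mu> \<nu>" and "\<And>n. dual.inflow_sum (n + 2 * \<nu>) = dual.inflow_sum n + \<mu> * a"
  shows "\<nu> \<le> a"
proof -
  have "inj_on (\<lambda>i. dual.inflow_sum (2 * i) mod a) {..<\<nu>}"
    using rotation_residues_distinct[OF assms]
    by (intro inj_onI) (metis lessThan_iff linorder_neqE_nat)
  then have "card {..<\<nu>} \<le> card {..<a}"
    by (rule card_inj_on_le) (use a_pos in auto)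
  then show ?thesis by simp
qed

end

context bounded_game
begin

text \<open>Regime 2: the left firings advance by \<open>\<mu> * a\<close> every \<open>2 * \<nu>\<close> steps, hence (by the return maps)
  the right firings by \<open>\<mu> * b\<close>, and then all piles repeat with period \<open>2 * \<nu>\<close> from time 2 on.\<close>

lemma bounded_period_bound:
  assumes "repeats 0 p" "0 < p"
  shows "\<exists>\<nu>>0. \<nu> \<le> a \<and> \<nu> dvd p \<and> repeats 2 (2 * \<nu>)"
proof -
  obtain \<nu> \<mu> where \<nu>: "0 < \<nu>" "\<nu> dvd p" "coprime \<mu> \<nu>"
    and T_shift: "\<And>n. dual.inflow_sum (n + 2 * \<nu>) = dual.inflow_sum n + \<mu> * a"
    using rotation_number[OF assms] by blast
  have S_shift: "inflow_sum (Suc n + 2 * \<nu>) = inflow_sum (Suc n) + \<mu> * b" for n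
    using dual.dual_inflow_sum_Suc[of "n + 2 * \<nu>"] dual.dual_inflow_sum_Suc[of n]
      T_shift[of n] dual.fire_count_shift by simp
  have x_rep: "x (Suc (Suc n) + 2 * \<nu>) i = x (Suc (Suc n)) i" if "i < a" for n i
    by (rule x_repeat_of_inflow_shift[OF that S_shift[of n] S_shift[of "Suc n"]])
  have y_rep: "y (Suc (Suc n) + 2 * \<nu>) j = y (Suc (Suc n)) j" if "j < b" for n j
    by (rule dual.x_repeat_of_inflow_shift[OF that T_shift[of "Suc n"] T_shift[of "Suc (Suc n)"]])
  have "repeats 2 (2 * \<nu>)"
    unfolding repeats_def
  proof (intro allI impI)
    fix t :: nat assume "2 \<le> t"
    then obtain n where "t = Suc (Suc n)" by (metis add_2_eq_Suc le_Suc_ex)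
    then show "(\<forall>i<a. x (t + 2 * \<nu>) i = x t i) \<and> (\<forall>j<b. y (t + 2 * \<nu>) j = y t j)"
      using x_rep y_rep by simp
  qed
  then show ?thesis using \<nu> rotation_denominator_le[OF \<nu>(3) T_shift] by blast
qed

end

context bipartite_game
begin

lemma period_divisor_bound:
  assumes "repeats 0 p" "0 < p"
  shows "\<exists>\<nu>>0. \<nu> \<le> a \<and> \<nu> dvd p \<and> repeats 2 (2 * \<nu>)"
proof (cases "(\<forall>t i. i < a \<longrightarrow> x t i < 2 * b) \<and> (\<forall>t j. j < b \<longrightarrow> y t j < 2 * a)")
  case True
  then interpret bounded_game a b x y by unfold_locales auto
  show ?thesis by (rule bounded_period_bound[OF assms])
next
  case False
  then have "repeats 0 1"
    using large_pile_fixed_point[OF assms] dual.large_pile_fixed_point[of p] assms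
    by (auto simp: not_less repeats_dual)
  then show ?thesis using a_pos by (intro exI[of _ 1]) (auto intro: repeats_of_fixed)
qed

end


section \<open>Parallel chip-firing on \<open>K\<^sub>a\<^sub>,\<^sub>b\<close>\<close>

lemma pstep_outside: "v \<notin> V \<Longrightarrow> (pstep V E ^^ t) \<sigma> v = \<sigma> v"
  by (induction t) (simp_all add: pstep_def)

lemma period_is_eventual_period:
  assumes "\<exists>p>0. \<exists>T. \<forall>t\<ge>T. (pstep V E ^^ (t + p)) \<sigma> = (pstep V E ^^ t) \<sigma>"
  shows "0 < period V E \<sigma> \<and> (\<exists>T. \<forall>t\<ge>T. (pstep V E ^^ (t + period V E \<sigma>)) \<sigma> = (pstep V E ^^ t) \<sigma>)"
  unfolding period_def by (rule LeastI_ex) (use assms in blast)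

lemma period_le:
  assumes "0 < q" and "\<forall>t\<ge>T. (pstep V E ^^ (t + q)) \<sigma> = (pstep V E ^^ t) \<sigma>"
  shows "period V E \<sigma> \<le> q"
  unfolding period_def by (rule Least_le) (use assms in blast)

lemma Kab_deg_Inl: "i < a \<Longrightarrow> deg (Kab_V a b) Kab_E (Inl i) = b"
proof -
  have "{w \<in> Kab_V a b. Kab_E (Inl i) w} = Inr ` {..<b}" by (auto simp: Kab_V_def Kab_E_def)
  then show ?thesis by (simp add: deg_def card_image)
qed

lemma Kab_deg_Inr: "j < b \<Longrightarrow> deg (Kab_V a b) Kab_E (Inr j) = a"
proof -
  have "{w \<in> Kab_V a b. Kab_E (Inr j) w} = Inl ` {..<a}" by (auto simp: Kab_V_def Kab_E_def)
  then show ?thesis by (simp add: deg_def card_image)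
qed

lemma Kab_pstep_Inl:
  assumes "i < a"
  shows "pstep (Kab_V a b) Kab_E f (Inl i) =
    (if b \<le> f (Inl i) then f (Inl i) - b else f (Inl i)) + card {j. j < b \<and> a \<le> f (Inr j)}"
proof -
  have "{w \<in> Kab_V a b. Kab_E (Inl i) w \<and> deg (Kab_V a b) Kab_E w \<le> f w} = Inr ` {j. j < b \<and> a \<le> f (Inr j)}"
    using Kab_deg_Inr[unfolded Kab_V_def, of _ b a] by (auto simp: Kab_V_def Kab_E_def)
  then show ?thesis using assms Kab_deg_Inl[OF assms] by (simp add: pstep_def Kab_V_def card_image)
qed

lemma Kab_pstep_Inr:
  assumes "j < b"
  shows "pstep (Kab_V a b) Kab_E f (Inr j) =
    (if a \<le> f (Inr j) then f (Inr j) - a else f (Inr j)) + card {i. i < a \<and> b \<le> f (Inl i)}"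
proof -
  have "{w \<in> Kab_V a b. Kab_E (Inr j) w \<and> deg (Kab_V a b) Kab_E w \<le> f w} = Inl ` {i. i < a \<and> b \<le> f (Inl i)}"
    using Kab_deg_Inl[unfolded Kab_V_def, of _ a b] by (auto simp: Kab_V_def Kab_E_def)
  then show ?thesis using assms Kab_deg_Inr[OF assms] by (simp add: pstep_def Kab_V_def card_image)
qed

definition Kab_orbit :: "nat \<Rightarrow> nat \<Rightarrow> (nat + nat \<Rightarrow> nat) \<Rightarrow> nat \<Rightarrow> nat + nat \<Rightarrow> nat" where
  "Kab_orbit a b \<sigma> t = (pstep (Kab_V a b) Kab_E ^^ t) \<sigma>"

lemma Kab_orbit_game:
  assumes "1 \<le> a" "1 \<le> b"
  shows "bipartite_game a b (\<lambda>t i. Kab_orbit a b \<sigma> (t + t0) (Inl i)) (\<lambda>t j. Kab_orbit a b \<sigma> (t + t0) (Inr j))"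
  using assms by unfold_locales (simp_all add: Kab_orbit_def Kab_pstep_Inl Kab_pstep_Inr)

lemma Kab_orbit_eqI:
  assumes "\<And>i. i < a \<Longrightarrow> Kab_orbit a b \<sigma> s (Inl i) = Kab_orbit a b \<sigma> t (Inl i)"
    and "\<And>j. j < b \<Longrightarrow> Kab_orbit a b \<sigma> s (Inr j) = Kab_orbit a b \<sigma> t (Inr j)"
  shows "Kab_orbit a b \<sigma> s = Kab_orbit a b \<sigma> t"
proof
  fix v
  show "Kab_orbit a b \<sigma> s v = Kab_orbit a b \<sigma> t v"
  proof (cases "v \<in> Kab_V a b")
    case True
    then show ?thesis using assms by (auto simp: Kab_V_def)
  next
    case False
    then show ?thesis by (simp add: Kab_orbit_def pstep_outside)
  qed
qed

text \<open>Piles never exceed their initial size or twice their degree, so the orbit is finite.\<close>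

lemma Kab_orbit_finite:
  assumes "1 \<le> a" "1 \<le> b"
  shows "finite (range (Kab_orbit a b \<sigma>))"
proof -
  let ?V = "Kab_V a b"
  define M where "M = (\<Sum>v\<in>?V. \<sigma> v) + 2 * a + 2 * b"
  interpret bipartite_game a b "\<lambda>t i. Kab_orbit a b \<sigma> t (Inl i)" "\<lambda>t j. Kab_orbit a b \<sigma> t (Inr j)"
    using Kab_orbit_game[OF assms, of \<sigma> 0] by simp
  have fin: "finite ?V" by (simp add: Kab_V_def)
  have init: "\<sigma> v \<le> (\<Sum>v\<in>?V. \<sigma> v)" if "v \<in> ?V" for v by (rule member_le_sum[OF that _ fin]) simp
  have "Kab_orbit a b \<sigma> t v \<le> M" if "v \<in> ?V" for t v
  proof -
    from that consider (left) i where "i < a" "v = Inl i" | (right) j where "j < b" "v = Inr j"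
      by (auto simp: Kab_V_def)
    then have "Kab_orbit a b \<sigma> t v \<le> max (\<sigma> v) (2 * a + 2 * b)"
    proof cases
      case left
      then show ?thesis using x_le_max[OF left(1), of t] by (auto simp: Kab_orbit_def)
    next
      case right
      then show ?thesis using dual.x_le_max[OF right(1), of t] by (auto simp: Kab_orbit_def)
    qed
    then show ?thesis using init[OF that] by (auto simp: M_def)
  qed
  then have "range (Kab_orbit a b \<sigma>) \<subseteq> {g. (\<forall>v\<in>?V. g v \<le> M) \<and> (\<forall>v. v \<notin> ?V \<longrightarrow> g v = \<sigma> v)}"
    by (auto simp: Kab_orbit_def pstep_outside)
  then show ?thesis using finite_functions_bounded_on[OF fin] by (rule finite_subset)
qed

lemma Kab_period_le:
  assumes "1 \<le> a" "1 \<le> b" "0 < q"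
    and "bipartite_game.repeats a b (\<lambda>t i. Kab_orbit a b \<sigma> (t + t0) (Inl i))
           (\<lambda>t j. Kab_orbit a b \<sigma> (t + t0) (Inr j)) t2 q"
  shows "period (Kab_V a b) Kab_E \<sigma> \<le> q"
proof (rule period_le[OF assms(3), of "t2 + t0"], intro allI impI)
  interpret bipartite_game a b "\<lambda>t i. Kab_orbit a b \<sigma> (t + t0) (Inl i)" "\<lambda>t j. Kab_orbit a b \<sigma> (t + t0) (Inr j)"
    by (rule Kab_orbit_game[OF assms(1,2)])
  fix t assume "t2 + t0 \<le> t"
  define u where "u = t - t0"
  have u: "t = u + t0" "t2 \<le> u" using \<open>t2 + t0 \<le> t\<close> by (simp_all add: u_def)
  have "\<forall>t\<ge>t2. (\<forall>i<a. Kab_orbit a b \<sigma> (t + q + t0) (Inl i) = Kab_orbit a b \<sigma> (t + t0) (Inl i))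
      \<and> (\<forall>j<b. Kab_orbit a b \<sigma> (t + q + t0) (Inr j) = Kab_orbit a b \<sigma> (t + t0) (Inr j))"
    using assms(4) by (simp add: repeats_def)
  then have "Kab_orbit a b \<sigma> (u + q + t0) = Kab_orbit a b \<sigma> (u + t0)"
    using u(2) by (intro Kab_orbit_eqI) auto
  then show "(pstep (Kab_V a b) Kab_E ^^ (t + q)) \<sigma> = (pstep (Kab_V a b) Kab_E ^^ t) \<sigma>"
    using u(1) by (simp add: Kab_orbit_def algebra_simps)
qed

theorem corollary3p6:
  fixes a b :: nat and \<sigma> :: "nat + nat \<Rightarrow> nat"
  assumes "a \<ge> 1" and "b \<ge> 1"
  shows "(odd (period (Kab_V a b) Kab_E \<sigma>) \<longrightarrow> period (Kab_V a b) Kab_E \<sigma> \<le> min a b)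
       \<and> (even (period (Kab_V a b) Kab_E \<sigma>) \<longrightarrow> period (Kab_V a b) Kab_E \<sigma> \<le> 2 * min a b)"
proof -
  let ?P = "period (Kab_V a b) Kab_E \<sigma>"
  have "\<exists>p>0. \<exists>T. \<forall>t\<ge>T. (pstep (Kab_V a b) Kab_E ^^ (t + p)) \<sigma> = (pstep (Kab_V a b) Kab_E ^^ t) \<sigma>"
    by (rule eventually_periodic_orbit[OF Kab_orbit_finite[OF assms, of \<sigma>, unfolded Kab_orbit_def[abs_def]]])
  then obtain T0 where "0 < ?P" and T0: "\<forall>t\<ge>T0. Kab_orbit a b \<sigma> (t + ?P) = Kab_orbit a b \<sigma> t"
    using period_is_eventual_period unfolding Kab_orbit_def by blast
  interpret game: bipartite_game a b "\<lambda>t i. Kab_orbit a b \<sigma> (t + T0) (Inl i)" "\<lambda>t j. Kab_orbit a b \<sigma> (t + T0) (Inr j)"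
    by (rule Kab_orbit_game[OF assms])
  have "Kab_orbit a b \<sigma> (t + ?P + T0) = Kab_orbit a b \<sigma> (t + T0)" for t
    using T0[rule_format, of "t + T0"] by (simp add: ac_simps)
  then have per: "game.repeats 0 ?P" by (simp add: game.repeats_def)
  obtain \<nu>1 where \<nu>1: "0 < \<nu>1" "\<nu>1 \<le> a" "\<nu>1 dvd ?P" "game.repeats 2 (2 * \<nu>1)"
    using game.period_divisor_bound[OF per \<open>0 < ?P\<close>] by blast
  obtain \<nu>2 where \<nu>2: "0 < \<nu>2" "\<nu>2 \<le> b" "\<nu>2 dvd ?P" "game.repeats 2 (2 * \<nu>2)"
    using game.dual.period_divisor_bound[of ?P] per \<open>0 < ?P\<close> by (auto simp: game.repeats_dual)
  have "?P \<le> 2 * \<nu>1" using \<nu>1 by (intro Kab_period_le[OF assms _ \<nu>1(4)]) simp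
  moreover have "?P \<le> 2 * \<nu>2" using \<nu>2 by (intro Kab_period_le[OF assms _ \<nu>2(4)]) simp
  moreover have "odd ?P \<Longrightarrow> ?P \<le> \<nu>1" "odd ?P \<Longrightarrow> ?P \<le> \<nu>2"
    using odd_multiple_le \<nu>1(3) \<nu>2(3) calculation by blast+
  ultimately show ?thesis using \<nu>1(2) \<nu>2(2) by auto
qed

end
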